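(* Every hyperlogarithm of type $\mathcal M_{0,5}$, $L(\varphi;z_1)$ with $\varphi$ a word in $S^0(A^{(1)}_{1\otimes2})$, is a single-valued holomorphic function of $(z_1,z_2)$ on some neighbourhood of $\{(z_1,z_2)\in\mathbf P^1\times\mathbf P^1: |z_1|<1,|z_2|<1\}\cup\{(0,1)\}$. In particular, if $|z_1|$ is small enough, it can be continued analytically with respect to the parameter $z_2$ from $z_2=0$ to $z_2=1$.
   Context: Let $\zeta_1=dz_1/z_1$, $\zeta_{11}=dz_1/(1-z_1)$, $\zeta^{(1)}_{12}=z_2dz_1/(1-z_1z_2)$, regarded as 1-forms in $z_1$ with $z_2$ a parameter. $S^0(A^{(1)}_{1\otimes2})$ is the span of words $\varphi=\zeta_1^{k_1-1}\circ\omega_1\circ\cdots\circ\zeta_1^{k_r-1}\circ\omega_r$ with $\omega_m\in\{\zeta_{11},\zeta^{(1)}_{12}\}$, $k_m\ge1$ (words not ending in $\zeta_1$), and the empty word. For such $\varphi$, $L(\varphi;z_1)=\int_0^{z_1}\varphi$ is the iterated integral ($\int_0^z\omega_1\circ\cdots\circ\omega_r=\int_0^z\omega_1(t)\int_0^t\omega_2\circ\cdots\circ\omega_r$, $\int\mathbf 1=1$); for small $|z_1|$ it equals $\sum_{n_1>\cdots>n_r>0}\frac{\alpha_1^{n_1-n_2}\cdots\alpha_r^{n_r}}{n_1^{k_1}\cdots n_r^{k_r}}z_1^{n_1}$ with $\alpha_m=1$ if $\omega_m=\zeta_{11}$ and $\alpha_m=z_2$ if $\omega_m=\zeta^{(1)}_{12}$.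 *)

theory Defs
  imports "HOL-Complex_Analysis.Complex_Analysis"
begin

text \<open>Letters of the alphabet: Z1 = zeta_1 = dz1/z1, Z11 = zeta_11 = dz1/(1-z1),
  Z12 = zeta^(1)_12 = z2 dz1/(1 - z1 z2), viewed as 1-forms in z1 with parameter z2.\<close>
datatype letter = Z1 | Z11 | Z12

fun form_coeff :: "letter \<Rightarrow> complex \<Rightarrow> complex \<Rightarrow> complex" where
  "form_coeff Z1 z2 t = 1 / t"
| "form_coeff Z11 z2 t = 1 / (1 - t)"
| "form_coeff Z12 z2 t = z2 / (1 - t * z2)"

text \<open>Words of S^0(A^(1)_{1(x)2}): the empty word or words not ending in zeta_1.
  Every word zeta_1^(k1-1) o omega_1 o ... o zeta_1^(kr-1) o omega_r is exactly such a list.\<close>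
definition S0_word :: "letter list \<Rightarrow> bool" where
  "S0_word w \<longleftrightarrow> w = [] \<or> last w \<noteq> Z1"

fun hyperlog :: "letter list \<Rightarrow> complex \<Rightarrow> complex \<Rightarrow> complex" where
  "hyperlog [] z2 z = 1"
| "hyperlog (a # w) z2 z =
     contour_integral (linepath 0 z) (\<lambda>t. form_coeff a z2 t * hyperlog w z2 t)"

definition holomorphic2_on :: "(complex \<times> complex \<Rightarrow> complex) \<Rightarrow> (complex \<times> complex) set \<Rightarrow> bool" where
  "holomorphic2_on f U \<longleftrightarrow>
     (\<forall>p\<in>U. \<exists>a b. (f has_derivative (\<lambda>h. a * fst h + b * snd h)) (at p))"

end

theory Submission
  imports Defs
begin

text \<open>Work on D = {|z1| < 1, |z1 z2| < 1}, an open set containing the bidisc and (0, 1) and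
  star-shaped in z1, on which the coefficients of the letters other than dt/t are holomorphic.
  Along the segment,
  int_0^z1 f(t, z2) dt = z1 int_0^1 f(s z1, z2) ds, and differentiation under the integral sign
  shows that this operation preserves continuous complex partial derivatives on D; continuous
  partials in turn give joint complex differentiability. The pole of dt/t is harmless: for a
  nonempty word not ending in dt/t the hyperlogarithm is z1 G with G again of this class, so
  integrating against dt/t just cancels the factor t.\<close>

definition has_C1_partials_on ::
    "(complex \<times> complex \<Rightarrow> complex) \<Rightarrow> (complex \<times> complex \<Rightarrow> complex) \<Rightarrow>
     (complex \<times> complex \<Rightarrow> complex) \<Rightarrow> (complex \<times> complex) set \<Rightarrow> bool" where
  "has_C1_partials_on F Fz Fy U \<longleftrightarrow>
     continuous_on U F \<and> continuous_on U Fz \<and> continuous_on U Fy \<and>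
     (\<forall>p\<in>U. ((\<lambda>z. F (z, snd p)) has_field_derivative Fz p) (at (fst p)) \<and>
            ((\<lambda>y. F (fst p, y)) has_field_derivative Fy p) (at (snd p)))"

definition C1_on :: "(complex \<times> complex \<Rightarrow> complex) \<Rightarrow> (complex \<times> complex) set \<Rightarrow> bool" where
  "C1_on F U \<longleftrightarrow> (\<exists>Fz Fy. has_C1_partials_on F Fz Fy U)"

lemma C1_on_const: "C1_on (\<lambda>p. c) U"
  unfolding C1_on_def has_C1_partials_on_def by (intro exI[of _ "\<lambda>p. 0"]) auto

lemma C1_on_fst: "C1_on fst U"
  unfolding C1_on_def has_C1_partials_on_def
  by (intro exI[of _ "\<lambda>p. 1"] exI[of _ "\<lambda>p. 0"])
     (auto intro!: continuous_intros derivative_eq_intros)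

lemma has_C1_partials_on_mult:
  assumes "has_C1_partials_on F Fz Fy U" "has_C1_partials_on G Gz Gy U"
  shows "has_C1_partials_on (\<lambda>p. F p * G p)
           (\<lambda>p. Fz p * G p + Gz p * F p) (\<lambda>p. Fy p * G p + Gy p * F p) U"
  using assms unfolding has_C1_partials_on_def
  by (auto intro!: continuous_intros DERIV_mult[THEN DERIV_cong])

lemma C1_on_mult: "C1_on F U \<Longrightarrow> C1_on G U \<Longrightarrow> C1_on (\<lambda>p. F p * G p) U"
  unfolding C1_on_def by (blast intro: has_C1_partials_on_mult)

lemma open_slice_fst: "open (U :: (complex \<times> complex) set) \<Longrightarrow> open {z. (z, y) \<in> U}"
  using continuous_open_vimage[of U "\<lambda>z. (z, y)"] by (simp add: vimage_def)

lemma open_slice_snd: "open (U :: (complex \<times> complex) set) \<Longrightarrow> open {y. (z, y) \<in> U}"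
  using continuous_open_vimage[of U "\<lambda>y. (z, y)"] by (simp add: vimage_def)

lemma has_C1_partials_on_cong:
  assumes "open U" "has_C1_partials_on F Fz Fy U" and FG: "\<And>p. p \<in> U \<Longrightarrow> F p = G p"
  shows "has_C1_partials_on G Fz Fy U"
proof -
  have F: "continuous_on U F" "continuous_on U Fz" "continuous_on U Fy"
    "\<And>p. p \<in> U \<Longrightarrow> ((\<lambda>z. F (z, snd p)) has_field_derivative Fz p) (at (fst p))"
    "\<And>p. p \<in> U \<Longrightarrow> ((\<lambda>y. F (fst p, y)) has_field_derivative Fy p) (at (snd p))"
    using assms(2) unfolding has_C1_partials_on_def by blast+
  have "continuous_on U G"
    using continuous_on_eq[OF F(1) FG] .
  moreover have "((\<lambda>z. G (z, snd p)) has_field_derivative Fz p) (at (fst p))"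
    if p: "p \<in> U" for p
    by (rule has_field_derivative_transform_within_open[OF F(4)[OF p] open_slice_fst[OF assms(1)]])
       (use p FG in auto)
  moreover have "((\<lambda>y. G (fst p, y)) has_field_derivative Fy p) (at (snd p))"
    if p: "p \<in> U" for p
    by (rule has_field_derivative_transform_within_open[OF F(5)[OF p] open_slice_snd[OF assms(1)]])
       (use p FG in auto)
  ultimately show ?thesis
    using F(2,3) unfolding has_C1_partials_on_def by blast
qed

lemma C1_on_cong: "open U \<Longrightarrow> C1_on F U \<Longrightarrow> (\<And>p. p \<in> U \<Longrightarrow> F p = G p) \<Longrightarrow> C1_on G U"
  unfolding C1_on_def by (blast intro: has_C1_partials_on_cong)

lemma has_C1_partials_on_imp_has_derivative:
  assumes "open U" "has_C1_partials_on F Fz Fy U" "p \<in> U"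
  shows "(F has_derivative (\<lambda>h. Fz p * fst h + Fy p * snd h)) (at p)"
proof -
  obtain x y where p: "p = (x, y)" by (cases p)
  obtain X B where X: "open X" "open B" "p \<in> X \<times> B" "X \<times> B \<subseteq> U"
    using open_prod_elim[OF assms(1,3)] .
  obtain e where e: "e > 0" "ball y e \<subseteq> B"
    using X(2,3) p openE by (metis mem_Times_iff snd_conv)
  define Y where "Y = ball y e"
  have XY: "X \<times> Y \<subseteq> U" "x \<in> X" "y \<in> Y" "open (X \<times> Y)" "convex Y"
    using X e p by (auto simp: Y_def open_Times)
  have Fy: "continuous_on U Fy"
    and Fz': "\<And>p. p \<in> U \<Longrightarrow> ((\<lambda>z. F (z, snd p)) has_field_derivative Fz p) (at (fst p))"
    and Fy': "\<And>p. p \<in> U \<Longrightarrow> ((\<lambda>y. F (fst p, y)) has_field_derivative Fy p) (at (snd p))"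
    using assms(2) unfolding has_C1_partials_on_def by blast+
  have "((\<lambda>(a, b). F (a, b)) has_derivative (\<lambda>(tx, ty). Fz p * tx + blinfun_mult_right (Fy (x, y)) ty))
      (at (x, y) within X \<times> Y)"
  proof (rule has_derivative_partialsI)
    show "((\<lambda>a. F (a, y)) has_derivative (*) (Fz p)) (at x within X)"
      using Fz'[OF assms(3)] by (simp add: p has_field_derivative_def has_derivative_at_withinI)
  next
    fix a b assume "a \<in> X" "b \<in> Y"
    then have "(a, b) \<in> U" using XY by auto
    then show "((\<lambda>b. F (a, b)) has_derivative blinfun_apply (blinfun_mult_right (Fy (a, b)))) (at b within Y)"
      using Fy'[of "(a, b)"] by (simp add: has_field_derivative_def has_derivative_at_withinI)
  next
    have "continuous_on (X \<times> Y) Fy"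
      using continuous_on_subset[OF Fy XY(1)] .
    then have "continuous_on (X \<times> Y) (\<lambda>q. blinfun_mult_right (Fy q))"
      by (intro continuous_intros)
    then show "continuous (at (x, y) within X \<times> Y) (\<lambda>(a, b). blinfun_mult_right (Fy (a, b)))"
      using XY by (simp add: case_prod_unfold continuous_on_eq_continuous_within)
  qed (fact XY)+
  moreover have "at (x, y) within X \<times> Y = at (x, y)"
    using XY by (intro at_within_open) auto
  ultimately show ?thesis
    by (simp add: p case_prod_unfold)
qed

lemma C1_on_imp_holomorphic2_on: "open U \<Longrightarrow> C1_on F U \<Longrightarrow> holomorphic2_on F U"
  unfolding C1_on_def holomorphic2_on_def
  by (blast intro: has_C1_partials_on_imp_has_derivative)

lemma continuous_on_scaled_fst:
  fixes U :: "(complex \<times> complex) set"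
  assumes "continuous_on U h"
    and star: "\<And>p s. p \<in> U \<Longrightarrow> s \<in> {0..1} \<Longrightarrow> (of_real s * fst p, snd p) \<in> U"
  shows "continuous_on (U \<times> {0..1}) (\<lambda>(p, s). h (of_real s * fst p, snd p))"
  unfolding case_prod_unfold
  by (rule continuous_on_compose2[OF assms(1)]) (auto intro!: continuous_intros star)

lemma has_field_derivative_segment_integral_fst:
  assumes "open U"
    and star: "\<And>p s. p \<in> U \<Longrightarrow> s \<in> {0..1} \<Longrightarrow> (of_real s * fst p, snd p) \<in> U"
    and "has_C1_partials_on g gz gy U" "(x, y) \<in> U"
  shows "((\<lambda>z. integral {0..1} (\<lambda>s. g (of_real s * z, y))) has_field_derivative
           integral {0..1} (\<lambda>s. of_real s * gz (of_real s * x, y))) (at x)"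
proof -
  have g: "continuous_on U g" "continuous_on U gz"
    and gz': "\<And>p. p \<in> U \<Longrightarrow> ((\<lambda>z. g (z, snd p)) has_field_derivative gz p) (at (fst p))"
    using assms(3) unfolding has_C1_partials_on_def by blast+
  obtain r where r: "r > 0" "ball x r \<subseteq> {z. (z, y) \<in> U}"
    using open_slice_fst[OF assms(1)] assms(4) by (metis mem_Collect_eq openE)
  have scaled: "(of_real s * z, y) \<in> U" if "z \<in> ball x r" "s \<in> {0..1}" for z s
    using star[of "(z, y)" s] r(2) that by auto
  have "((\<lambda>z. integral (cbox 0 1) (\<lambda>s. g (of_real s * z, y))) has_field_derivative
          integral (cbox 0 1) (\<lambda>s. of_real s * gz (of_real s * x, y))) (at x within ball x r)"
  proof (rule leibniz_rule_field_derivative)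
    fix z and s :: real assume z: "z \<in> ball x r" and s: "s \<in> cbox 0 1"
    have "((\<lambda>z. g (of_real s * z, y)) has_field_derivative gz (of_real s * z, y) * of_real s) (at z)"
      using gz'[OF scaled[OF z]] s
      by (intro DERIV_chain2[of "\<lambda>u. g (u, y)"]) (auto intro!: derivative_eq_intros)
    then show "((\<lambda>z. g (of_real s * z, y)) has_field_derivative of_real s * gz (of_real s * z, y))
        (at z within ball x r)"
      by (simp add: mult.commute has_field_derivative_at_within)
  next
    fix z assume z: "z \<in> ball x r"
    have "continuous_on {0..1} (\<lambda>s. g (of_real s * z, y))"
      by (rule continuous_on_compose2[OF g(1)]) (auto intro!: continuous_intros scaled[OF z])
    then show "(\<lambda>s. g (of_real s * z, y)) integrable_on cbox 0 1"
      by (simp add: integrable_continuous_real)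
  next
    show "continuous_on (ball x r \<times> cbox 0 1) (\<lambda>(z, s). of_real s * gz (of_real s * z, y))"
      unfolding case_prod_unfold cbox_interval
      by (intro continuous_intros continuous_on_compose2[OF g(2)]) (auto intro!: continuous_intros scaled)
  qed (use r in auto)
  moreover have "at x within ball x r = at x"
    using r by (intro at_within_open) auto
  ultimately show ?thesis
    by (simp add: cbox_interval)
qed

lemma has_field_derivative_segment_integral_snd:
  assumes "open U"
    and star: "\<And>p s. p \<in> U \<Longrightarrow> s \<in> {0..1} \<Longrightarrow> (of_real s * fst p, snd p) \<in> U"
    and "has_C1_partials_on g gz gy U" "(x, y) \<in> U"
  shows "((\<lambda>w. integral {0..1} (\<lambda>s. g (of_real s * x, w))) has_field_derivative
           integral {0..1} (\<lambda>s. gy (of_real s * x, y))) (at y)"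
proof -
  have g: "continuous_on U g" "continuous_on U gy"
    and gy': "\<And>p. p \<in> U \<Longrightarrow> ((\<lambda>w. g (fst p, w)) has_field_derivative gy p) (at (snd p))"
    using assms(3) unfolding has_C1_partials_on_def by blast+
  obtain r where r: "r > 0" "ball y r \<subseteq> {w. (x, w) \<in> U}"
    using open_slice_snd[OF assms(1)] assms(4) by (metis mem_Collect_eq openE)
  have scaled: "(of_real s * x, w) \<in> U" if "w \<in> ball y r" "s \<in> {0..1}" for w s
    using star[of "(x, w)" s] r(2) that by auto
  have "((\<lambda>w. integral (cbox 0 1) (\<lambda>s. g (of_real s * x, w))) has_field_derivative
          integral (cbox 0 1) (\<lambda>s. gy (of_real s * x, y))) (at y within ball y r)"
  proof (rule leibniz_rule_field_derivative)
    fix w and s :: real assume "w \<in> ball y r" "s \<in> cbox 0 1"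
    then show "((\<lambda>w. g (of_real s * x, w)) has_field_derivative gy (of_real s * x, w))
        (at w within ball y r)"
      using gy'[OF scaled] by (simp add: has_field_derivative_at_within)
  next
    fix w assume w: "w \<in> ball y r"
    have "continuous_on {0..1} (\<lambda>s. g (of_real s * x, w))"
      by (rule continuous_on_compose2[OF g(1)]) (auto intro!: continuous_intros scaled[OF w])
    then show "(\<lambda>s. g (of_real s * x, w)) integrable_on cbox 0 1"
      by (simp add: integrable_continuous_real)
  next
    show "continuous_on (ball y r \<times> cbox 0 1) (\<lambda>(w, s). gy (of_real s * x, w))"
      unfolding case_prod_unfold cbox_interval
      by (rule continuous_on_compose2[OF g(2)]) (auto intro!: continuous_intros scaled)
  qed (use r in auto)
  moreover have "at y within ball y r = at y"
    using r by (intro at_within_open) auto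
  ultimately show ?thesis
    by (simp add: cbox_interval)
qed

lemma has_C1_partials_on_segment_integral:
  assumes "open U"
    and star: "\<And>p s. p \<in> U \<Longrightarrow> s \<in> {0..1} \<Longrightarrow> (of_real s * fst p, snd p) \<in> U"
    and g: "has_C1_partials_on g gz gy U"
  shows "has_C1_partials_on (\<lambda>p. integral {0..1} (\<lambda>s. g (of_real s * fst p, snd p)))
           (\<lambda>p. integral {0..1} (\<lambda>s. of_real s * gz (of_real s * fst p, snd p)))
           (\<lambda>p. integral {0..1} (\<lambda>s. gy (of_real s * fst p, snd p))) U"
proof -
  have cont: "continuous_on U (\<lambda>p. integral {0..1} (\<lambda>s. k s * h (of_real s * fst p, snd p)))"
    if "continuous_on U h" "continuous_on {0..1} k" for h and k :: "real \<Rightarrow> complex"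
  proof -
    have "continuous_on (U \<times> {0..1}) (\<lambda>x. k (snd x))"
      by (rule continuous_on_compose2[OF that(2)]) (auto intro: continuous_intros)
    then have "continuous_on (U \<times> {0..1}) (\<lambda>(p, s). k s * h (of_real s * fst p, snd p))"
      using continuous_on_scaled_fst[OF that(1) star]
      by (auto simp: case_prod_unfold intro!: continuous_intros)
    then show ?thesis
      using integral_continuous_on_param[of U 0 1 "\<lambda>p s. k s * h (of_real s * fst p, snd p)"]
      by (simp add: cbox_interval)
  qed
  show ?thesis
    unfolding has_C1_partials_on_def
    using cont[of g "\<lambda>s. 1"] cont[of gz of_real] cont[of gy "\<lambda>s. 1"] g
      has_field_derivative_segment_integral_fst[OF assms(1) star g]
      has_field_derivative_segment_integral_snd[OF assms(1) star g]
    by (auto simp: has_C1_partials_on_def intro!: continuous_intros)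
qed

lemma C1_on_segment_integral:
  assumes "open U"
    and "\<And>p s. p \<in> U \<Longrightarrow> s \<in> {0..1} \<Longrightarrow> (of_real s * fst p, snd p) \<in> U"
    and "C1_on g U"
  shows "C1_on (\<lambda>p. integral {0..1} (\<lambda>s. g (of_real s * fst p, snd p))) U"
  using assms has_C1_partials_on_segment_integral unfolding C1_on_def by blast

text \<open>The condition |z1 z2| < 1, rather than |z2| < 1, keeps 1 - t z2 away from 0 on the whole
  segment [0, z1] and still admits the point (0, 1).\<close>

definition hyperlog_domain :: "(complex \<times> complex) set" where
  "hyperlog_domain = {p. norm (fst p) < 1 \<and> norm (fst p * snd p) < 1}"

lemma open_hyperlog_domain: "open hyperlog_domain"
  unfolding hyperlog_domain_def
  by (intro open_Collect_conj open_Collect_less continuous_intros)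

lemma hyperlog_domain_scaled:
  assumes "p \<in> hyperlog_domain" "s \<in> {0..1}"
  shows "(of_real s * fst p, snd p) \<in> hyperlog_domain"
proof -
  have "norm (of_real s * q) \<le> norm q" for q :: complex
    using assms(2) by (simp add: norm_mult mult_left_le_one_le)
  from this[of "fst p"] this[of "fst p * snd p"] show ?thesis
    using assms(1) by (auto simp: hyperlog_domain_def mult.assoc)
qed

lemma bidisc_subset_hyperlog_domain:
  "{p. norm (fst p) < 1 \<and> norm (snd p) < 1} \<union> {(0, 1)} \<subseteq> hyperlog_domain"
proof -
  have "norm (z * w) < 1" if "norm z < 1" "norm w < 1" for z w :: complex
  proof -
    have "norm z * norm w \<le> norm z"
      using that by (simp add: mult_right_le_one_le less_imp_le)
    then show ?thesis
      using that by (simp add: norm_mult)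
  qed
  then show ?thesis
    by (auto simp: hyperlog_domain_def)
qed

lemma C1_on_form_coeff:
  assumes "a \<noteq> Z1"
  shows "C1_on (\<lambda>p. form_coeff a (snd p) (fst p)) hyperlog_domain"
proof -
  have nz: "1 - fst p \<noteq> 0" "1 - fst p * snd p \<noteq> 0" if "p \<in> hyperlog_domain" for p
    using that by (auto simp: hyperlog_domain_def)
  show ?thesis
  proof (cases a)
    case Z11
    have "has_C1_partials_on (\<lambda>p. 1 / (1 - fst p)) (\<lambda>p. 1 / (1 - fst p)^2) (\<lambda>p. 0) hyperlog_domain"
      unfolding has_C1_partials_on_def
      using nz by (auto intro!: continuous_intros derivative_eq_intros simp: power2_eq_square)
    then show ?thesis
      using Z11 by (auto simp: C1_on_def)
  next
    case Z12
    have "has_C1_partials_on (\<lambda>p. snd p / (1 - fst p * snd p))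
        (\<lambda>p. snd p ^ 2 / (1 - fst p * snd p) ^ 2) (\<lambda>p. 1 / (1 - fst p * snd p) ^ 2) hyperlog_domain"
      unfolding has_C1_partials_on_def fst_conv snd_conv
    proof (intro conjI ballI)
      fix p assume "p \<in> hyperlog_domain"
      obtain z w where p: "p = (z, w)" by (cases p)
      have "1 - z * w \<noteq> 0" using nz(2)[OF \<open>p \<in> hyperlog_domain\<close>] by (simp add: p)
      then show "((\<lambda>z. snd p / (1 - z * snd p)) has_field_derivative
            snd p ^ 2 / (1 - fst p * snd p) ^ 2) (at (fst p))"
        and "((\<lambda>w. w / (1 - fst p * w)) has_field_derivative 1 / (1 - fst p * snd p) ^ 2) (at (snd p))"
        unfolding p fst_conv snd_conv
        by (auto intro!: derivative_eq_intros simp: field_simps power2_eq_square)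
    qed (use nz in \<open>auto intro!: continuous_intros\<close>)
    then show ?thesis
      using Z12 by (auto simp: C1_on_def)
  qed (use assms in simp)
qed

lemma hyperlog_Cons:
  "hyperlog (a # w) y z =
     z * integral {0..1} (\<lambda>s. form_coeff a y (of_real s * z) * hyperlog w y (of_real s * z))"
  by (simp add: contour_integral_integral linepath_def scaleR_conv_of_real mult.commute)

lemma hyperlog_Z1_Cons:
  assumes "\<And>s. s \<in> {0..1} \<Longrightarrow> hyperlog w y (of_real s * z) = of_real s * z * G (of_real s * z)"
  shows "hyperlog (Z1 # w) y z = z * integral {0..1} (\<lambda>s. G (of_real s * z))"
proof (cases "z = 0")
  case False
  have "integral {0..1} (\<lambda>s. form_coeff Z1 y (of_real s * z) * hyperlog w y (of_real s * z))
      = integral {0..1} (\<lambda>s. G (of_real s * z))"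
  proof (rule integral_spike[of "{0}"]) \<comment> \<open>at \<open>s = 0\<close> the integrand is junk: \<open>1 / 0 = 0\<close>\<close>
    fix s :: real assume "s \<in> {0..1} - {0}"
    with False assms[of s] show "G (of_real s * z) =
        form_coeff Z1 y (of_real s * z) * hyperlog w y (of_real s * z)"
      by simp
  qed simp
  then show ?thesis
    unfolding hyperlog_Cons by simp
qed (simp add: hyperlog_Cons)

lemma S0_word_Cons: "S0_word (a # w) \<Longrightarrow> S0_word w \<and> (w = [] \<longrightarrow> a \<noteq> Z1)"
  unfolding S0_word_def by (cases w) auto

lemma hyperlog_eq_fst_mult:
  assumes "S0_word w" "w \<noteq> []"
  obtains G where "C1_on G hyperlog_domain"
    and "\<And>p. p \<in> hyperlog_domain \<Longrightarrow> hyperlog w (snd p) (fst p) = fst p * G p"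
  using assms
proof (induction w arbitrary: thesis)
  case (Cons a v)
  have S0: "S0_word v" and not_Z1: "v = [] \<Longrightarrow> a \<noteq> Z1"
    using S0_word_Cons[OF Cons.prems(2)] by auto
  have L: "C1_on (\<lambda>p. hyperlog v (snd p) (fst p)) hyperlog_domain"
  proof (cases "v = []")
    case False
    then obtain G where G: "C1_on G hyperlog_domain"
      and eq: "\<And>p. p \<in> hyperlog_domain \<Longrightarrow> hyperlog v (snd p) (fst p) = fst p * G p"
      using Cons.IH S0 by blast
    show ?thesis
      by (rule C1_on_cong[OF open_hyperlog_domain C1_on_mult[OF C1_on_fst G]]) (simp add: eq)
  qed (simp add: C1_on_const)
  obtain g where g: "C1_on g hyperlog_domain"
    and eq: "\<And>p. p \<in> hyperlog_domain \<Longrightarrow>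
      hyperlog (a # v) (snd p) (fst p) = fst p * integral {0..1} (\<lambda>s. g (of_real s * fst p, snd p))"
  proof (cases "a = Z1")
    case True
    then obtain G where G: "C1_on G hyperlog_domain"
      and eq_v: "\<And>p. p \<in> hyperlog_domain \<Longrightarrow> hyperlog v (snd p) (fst p) = fst p * G p"
      using Cons.IH S0 not_Z1 by blast
    have "hyperlog (a # v) (snd p) (fst p) =
        fst p * integral {0..1} (\<lambda>s. G (of_real s * fst p, snd p))" if p: "p \<in> hyperlog_domain" for p
      unfolding True
    proof (rule hyperlog_Z1_Cons[where G = "\<lambda>t. G (t, snd p)"])
      fix s :: real assume "s \<in> {0..1}"
      from eq_v[OF hyperlog_domain_scaled[OF p this]]
      show "hyperlog v (snd p) (of_real s * fst p) = of_real s * fst p * G (of_real s * fst p, snd p)"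
        by simp
    qed
    then show ?thesis
      by (rule that[OF G])
  next
    case False
    show ?thesis
      by (rule that[OF C1_on_mult[OF C1_on_form_coeff[OF False] L]])
         (simp only: hyperlog_Cons fst_conv snd_conv)
  qed
  show ?case
    by (rule Cons.prems(1)[OF C1_on_segment_integral[OF open_hyperlog_domain hyperlog_domain_scaled g]])
       (simp_all add: eq del: hyperlog.simps)
qed simp

lemma C1_on_hyperlog:
  assumes "S0_word w"
  shows "C1_on (\<lambda>p. hyperlog w (snd p) (fst p)) hyperlog_domain"
proof (cases "w = []")
  case False
  then obtain G where G: "C1_on G hyperlog_domain"
    and eq: "\<And>p. p \<in> hyperlog_domain \<Longrightarrow> hyperlog w (snd p) (fst p) = fst p * G p"
    using hyperlog_eq_fst_mult assms by blast
  show ?thesis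
    by (rule C1_on_cong[OF open_hyperlog_domain C1_on_mult[OF C1_on_fst G]]) (simp add: eq)
qed (simp add: C1_on_const)

theorem proposition7p2:
  fixes w :: "letter list"
  assumes "S0_word w"
  shows "\<exists>U. open U \<and>
           {p :: complex \<times> complex. norm (fst p) < 1 \<and> norm (snd p) < 1} \<union> {(0, 1)} \<subseteq> U \<and>
           holomorphic2_on (\<lambda>p. hyperlog w (snd p) (fst p)) U"
  using open_hyperlog_domain bidisc_subset_hyperlog_domain
    C1_on_imp_holomorphic2_on[OF open_hyperlog_domain C1_on_hyperlog[OF assms]]
  by blast

end
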